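(* Fix $m\ge 2$, $C>0$ and $K\in[0,\infty)$. If $G=\langle\mathcal{S}\mid\mathcal{R}\rangle$ is a random $m$-generator, $n=Cl^K$ relator group, then asymptotically almost surely this presentation is $C'(\lambda)$ for $\lambda=\dfrac{6(K+2)\log l}{l\log(2m-1)}$.
   Context: Random $m$-generator, $n=Cl^K$ relator group: each of the $n$ relators is chosen independently and uniformly from the cyclically reduced words of length at most $l$ in $m$ generators and their inverses ($n$ rounded to an integer); "asymptotically almost surely" means with probability tending to $1$ as $l\to\infty$. $C'(\lambda)$: distinct cyclic conjugates of relators and their inverses share common initial subwords of length $<\lambda$ times the shorter length. *)

theory Defs
  imports Complex_Main "HOL-Library.Sublist"
begin

text \<open>Letters over generators 0..<m: (i, False) is the generator s_i, (i, True) its inverse.\<close>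
type_synonym letter = "nat \<times> bool"

definition inv_letter :: "letter \<Rightarrow> letter" where
  "inv_letter x = (fst x, \<not> snd x)"

definition inv_word :: "letter list \<Rightarrow> letter list" where
  "inv_word w = rev (map inv_letter w)"

definition reduced_word :: "letter list \<Rightarrow> bool" where
  "reduced_word w \<longleftrightarrow> (\<forall>i. Suc i < length w \<longrightarrow> w ! Suc i \<noteq> inv_letter (w ! i))"

definition cyc_reduced :: "letter list \<Rightarrow> bool" where
  "cyc_reduced w \<longleftrightarrow> reduced_word w \<and> (w \<noteq> [] \<longrightarrow> last w \<noteq> inv_letter (hd w))"

definition cr_words :: "nat \<Rightarrow> nat \<Rightarrow> letter list set" where
  "cr_words m l = {w. length w \<le> l \<and> set w \<subseteq> {0..<m} \<times> UNIV \<and> cyc_reduced w}"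

definition cyclic_conjugates :: "letter list \<Rightarrow> letter list set" where
  "cyclic_conjugates w = {rotate k w | k. True}"

definition symmetrized :: "letter list set \<Rightarrow> letter list set" where
  "symmetrized R = (\<Union>r\<in>R. cyclic_conjugates r \<union> cyclic_conjugates (inv_word r))"

definition small_cancellation :: "real \<Rightarrow> letter list set \<Rightarrow> bool" where
  "small_cancellation lam R \<longleftrightarrow>
     (\<forall>u\<in>symmetrized R. \<forall>v\<in>symmetrized R. u \<noteq> v \<longrightarrow>
        (\<forall>p. p \<noteq> [] \<and> prefix p u \<and> prefix p v \<longrightarrow>
             real (length p) < lam * real (min (length u) (length v))))"

definition num_relators :: "real \<Rightarrow> real \<Rightarrow> nat \<Rightarrow> nat" where
  "num_relators C K l = nat (round (C * real l powr K))"

text \<open>Probability that a tuple of n relators chosen independently and uniformly from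
  cr_words m l satisfies P (uniform measure on the n-fold product = counting).\<close>
definition rel_prob :: "nat \<Rightarrow> nat \<Rightarrow> nat \<Rightarrow> (letter list list \<Rightarrow> bool) \<Rightarrow> real" where
  "rel_prob m n l P =
     real (card {rs. length rs = n \<and> set rs \<subseteq> cr_words m l \<and> P rs})
   / real (card {rs. length rs = n \<and> set rs \<subseteq> cr_words m l})"

end

theory Submission
  imports Defs
begin

text \<open>
  Let h = l div 2 and s = \<lceil>\<lambda> h\<rceil>. If a random presentation is not C'(\<lambda>), then either
  some relator is shorter than h, or two distinct cyclic conjugates of relators or their
  inverses share a prefix of length s. In the second case s letters of some relator are
  determined by other letters: by letters of the same relator (a cyclic repeat, possibly
  inverted) or by an independent relator. Either way the event has probability
  O(l (2m-1)^(-s)) among cyclically reduced words, and there are O(n^2 l^2) such events.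
  For n = C l^K and the given \<lambda> one has (2m-1)^s \<ge> e^(-3(K+2)) l^(3(K+2)), so the failure
  probability is O(1/l).
\<close>

section \<open>Reduced words\<close>

definition alphabet :: "nat \<Rightarrow> letter set" where
  "alphabet m = {0..<m} \<times> UNIV"

definition reduced_words :: "nat \<Rightarrow> nat \<Rightarrow> letter list set" where
  "reduced_words m k = {w. length w = k \<and> set w \<subseteq> alphabet m \<and> reduced_word w}"

definition reduced_words_upto :: "nat \<Rightarrow> nat \<Rightarrow> letter list set" where
  "reduced_words_upto m k = {w. length w \<le> k \<and> set w \<subseteq> alphabet m \<and> reduced_word w}"

definition cyc_reduced_words :: "nat \<Rightarrow> nat \<Rightarrow> letter list set" where
  "cyc_reduced_words m k = {w. length w = k \<and> set w \<subseteq> alphabet m \<and> cyc_reduced w}"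

lemma inv_letter_inv_letter [simp]: "inv_letter (inv_letter x) = x"
  by (simp add: inv_letter_def)

lemma inv_letter_neq [simp]: "inv_letter x \<noteq> x" "x \<noteq> inv_letter x"
  by (auto simp: inv_letter_def prod_eq_iff)

lemma inv_letter_in_alphabet [simp]: "inv_letter x \<in> alphabet m \<longleftrightarrow> x \<in> alphabet m"
  by (cases x) (auto simp: inv_letter_def alphabet_def)

lemma inv_word_inv_word [simp]: "inv_word (inv_word w) = w"
  by (simp add: inv_word_def rev_map comp_def)

lemma length_inv_word [simp]: "length (inv_word w) = length w"
  by (simp add: inv_word_def)

lemma set_inv_word: "set (inv_word w) = inv_letter ` set w"
  by (simp add: inv_word_def)

lemma finite_alphabet [simp]: "finite (alphabet m)"
  by (simp add: alphabet_def)

lemma card_alphabet: "card (alphabet m) = 2 * m"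
  by (simp add: alphabet_def card_cartesian_product)

lemma reduced_word_Nil [simp]: "reduced_word []"
  by (simp add: reduced_word_def)

lemma reduced_word_Cons:
  "reduced_word (x # w) \<longleftrightarrow> reduced_word w \<and> (w \<noteq> [] \<longrightarrow> hd w \<noteq> inv_letter x)"
  by (cases w) (auto simp: reduced_word_def nth_Cons' less_Suc_eq_0_disj)

lemma reduced_word_take: "reduced_word w \<Longrightarrow> reduced_word (take k w)"
  by (auto simp: reduced_word_def)

lemma reduced_word_drop: "reduced_word w \<Longrightarrow> reduced_word (drop k w)"
  by (auto simp: reduced_word_def)

lemma finite_reduced_words_upto [simp]: "finite (reduced_words_upto m k)"
  by (rule finite_subset[OF _ finite_lists_length_le[OF finite_alphabet, of m k]])
     (auto simp: reduced_words_upto_def)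

lemma reduced_words_subset_upto: "reduced_words m k \<subseteq> reduced_words_upto m k"
  by (auto simp: reduced_words_def reduced_words_upto_def)

lemma finite_reduced_words [simp]: "finite (reduced_words m k)"
  using finite_subset[OF reduced_words_subset_upto] by simp

lemma cyc_reduced_words_subset: "cyc_reduced_words m k \<subseteq> reduced_words m k"
  by (auto simp: cyc_reduced_words_def reduced_words_def cyc_reduced_def)

lemma finite_cyc_reduced_words [simp]: "finite (cyc_reduced_words m k)"
  using finite_subset[OF cyc_reduced_words_subset] by simp

lemma reduced_words_Suc:
  assumes "k \<ge> 1"
  shows "reduced_words m (Suc k) =
    (\<lambda>(w, x). x # w) ` (SIGMA w:reduced_words m k. alphabet m - {inv_letter (hd w)})"
proof (intro equalityI subsetI)
  fix v assume "v \<in> reduced_words m (Suc k)"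
  with assms obtain x w where "v = x # w" "w \<in> reduced_words m k" "x \<in> alphabet m"
    "hd w \<noteq> inv_letter x"
    by (cases v) (auto simp: reduced_words_def reduced_word_Cons)
  then show "v \<in> (\<lambda>(w, x). x # w) ` (SIGMA w:reduced_words m k. alphabet m - {inv_letter (hd w)})"
    by force
next
  fix v assume "v \<in> (\<lambda>(w, x). x # w) ` (SIGMA w:reduced_words m k. alphabet m - {inv_letter (hd w)})"
  with assms show "v \<in> reduced_words m (Suc k)"
    by (auto simp: reduced_words_def reduced_word_Cons)
qed

lemma card_reduced_words_Suc:
  assumes "k \<ge> 1"
  shows "card (reduced_words m (Suc k)) = (2 * m - 1) * card (reduced_words m k)"
proof -
  have inj: "inj_on (\<lambda>(w, x). x # w) (SIGMA w:reduced_words m k. alphabet m - {inv_letter (hd w)})"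
    by (auto simp: inj_on_def)
  have "card (reduced_words m (Suc k)) =
      (\<Sum>w\<in>reduced_words m k. card (alphabet m - {inv_letter (hd w)}))"
    unfolding reduced_words_Suc[OF assms] card_image[OF inj] by (rule card_SigmaI) auto
  also have "\<dots> = (\<Sum>w\<in>reduced_words m k. 2 * m - 1)"
  proof (rule sum.cong)
    fix w assume "w \<in> reduced_words m k"
    with assms have "hd w \<in> alphabet m" by (cases w) (auto simp: reduced_words_def)
    then show "card (alphabet m - {inv_letter (hd w)}) = 2 * m - 1" by (simp add: card_alphabet)
  qed simp
  finally show ?thesis by simp
qed

lemma card_reduced_words:
  "k \<ge> 1 \<Longrightarrow> card (reduced_words m k) = 2 * m * (2 * m - 1) ^ (k - 1)"
proof (induction k rule: dec_induct)
  case base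
  have "reduced_words m 1 = (\<lambda>x. [x]) ` alphabet m"
    by (auto simp: reduced_words_def reduced_word_def length_Suc_conv)
  then have "card (reduced_words m 1) = card (alphabet m)"
    by (simp add: card_image inj_on_def)
  then show ?case by (simp add: card_alphabet)
next
  case (step k)
  then show ?case using card_reduced_words_Suc[of k m] by (cases k) auto
qed

lemma card_reduced_words_le:
  assumes "m \<ge> 1"
  shows "real (card (reduced_words m k)) \<le> 2 * real (2 * m - 1) ^ k"
proof (cases k)
  case 0
  then have "reduced_words m k = {[]}" by (auto simp: reduced_words_def)
  then show ?thesis using 0 by simp
next
  case (Suc k')
  then have "real (card (reduced_words m k)) = real (2 * m) * real (2 * m - 1) ^ k'"
    by (simp add: card_reduced_words)
  also have "\<dots> \<le> 2 * real (2 * m - 1) * real (2 * m - 1) ^ k'"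
    using assms by (intro mult_right_mono) auto
  finally show ?thesis using Suc by simp
qed

lemma sum_power_le_twice_last:
  fixes q :: real
  assumes "q \<ge> 2"
  shows "(\<Sum>k\<le>L. q ^ k) \<le> 2 * q ^ L"
proof (induction L)
  case (Suc L)
  then have "(\<Sum>k\<le>Suc L. q ^ k) \<le> 2 * q ^ L + q ^ Suc L" by simp
  also have "\<dots> \<le> 2 * q ^ Suc L" using assms by simp
  finally show ?case .
qed simp

lemma card_reduced_words_upto_le:
  assumes "m \<ge> 2"
  shows "real (card (reduced_words_upto m L)) \<le> 4 * real (2 * m - 1) ^ L"
proof -
  have "reduced_words_upto m L = (\<Union>k\<le>L. reduced_words m k)"
    by (auto simp: reduced_words_upto_def reduced_words_def)
  then have "real (card (reduced_words_upto m L)) \<le> (\<Sum>k\<le>L. real (card (reduced_words m k)))"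
    by (metis card_UN_le finite_atMost of_nat_le_iff of_nat_sum)
  also have "\<dots> \<le> (\<Sum>k\<le>L. 2 * real (2 * m - 1) ^ k)"
    using assms by (intro sum_mono card_reduced_words_le) auto
  also have "\<dots> = 2 * (\<Sum>k\<le>L. real (2 * m - 1) ^ k)"
    by (simp add: sum_distrib_left)
  also have "\<dots> \<le> 2 * (2 * real (2 * m - 1) ^ L)"
    using assms by (intro mult_left_mono sum_power_le_twice_last) auto
  finally show ?thesis by simp
qed

section \<open>Cyclic words\<close>

lemma inj_rotate: "inj (rotate n)"
  unfolding rotate_def by (rule inj_fn[OF inj_rotate1])

definition cyc_nth :: "'a list \<Rightarrow> int \<Rightarrow> 'a" where
  "cyc_nth w i = w ! nat (i mod int (length w))"

lemma cyc_nth_nth: "t < length w \<Longrightarrow> cyc_nth w (int t) = w ! t"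
  by (simp add: cyc_nth_def)

lemma cyc_nth_cong: "i mod int (length w) = j mod int (length w) \<Longrightarrow> cyc_nth w i = cyc_nth w j"
  by (simp add: cyc_nth_def)

lemma cyc_nth_rotate:
  assumes "w \<noteq> []"
  shows "cyc_nth (rotate r w) i = cyc_nth w (int r + i)"
proof -
  define k where "k = length w"
  have k: "k > 0" using assms by (simp add: k_def)
  have "nat (i mod int k) < k" using k by (simp add: nat_less_iff)
  then have "cyc_nth (rotate r w) i = w ! ((r + nat (i mod int k)) mod k)"
    by (simp add: cyc_nth_def nth_rotate k_def)
  also have "(r + nat (i mod int k)) mod k = nat ((int r + i) mod int k)"
    using k by (simp add: nat_mod_as_int mod_add_right_eq)
  finally show ?thesis by (simp add: cyc_nth_def k_def)
qed

lemma cyc_nth_inv_word: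
  assumes "w \<noteq> []"
  shows "cyc_nth (inv_word w) i = inv_letter (cyc_nth w (- 1 - i))"
proof -
  define k where "k = length w"
  have k: "k > 0" using assms by (simp add: k_def)
  have lt: "nat (i mod int k) < k" using k by (simp add: nat_less_iff)
  then have "cyc_nth (inv_word w) i = inv_letter (w ! (k - 1 - nat (i mod int k)))"
    by (simp add: cyc_nth_def inv_word_def rev_nth k_def)
  also have "k - 1 - nat (i mod int k) = nat ((- 1 - i) mod int k)"
  proof -
    have "int (k - 1 - nat (i mod int k)) = int k - 1 - i mod int k"
      using lt by simp
    also have "\<dots> = (int k - 1 - i mod int k) mod int k"
    proof -
      have "0 \<le> int k - 1 - i mod int k" "int k - 1 - i mod int k < int k"
        using k pos_mod_bound[of "int k" i] pos_mod_sign[of "int k" i] by linarith+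
      then show ?thesis by (simp add: mod_pos_pos_trivial)
    qed
    also have "\<dots> = (int k + (- 1 - i)) mod int k"
      by (simp add: mod_diff_right_eq diff_diff_eq)
    also have "\<dots> = (- 1 - i) mod int k"
      by (rule mod_add_self1)
    finally show ?thesis by simp
  qed
  finally show ?thesis by (simp add: cyc_nth_def k_def)
qed

lemma all_less_split_last:
  assumes "(n::nat) > 0"
  shows "(\<forall>i<n. Q i) \<longleftrightarrow> (\<forall>i. Suc i < n \<longrightarrow> Q i) \<and> Q (n - 1)"
proof -
  have "i < n \<longleftrightarrow> Suc i < n \<or> i = n - 1" for i using assms by linarith
  then show ?thesis by (metis Suc_lessD diff_less zero_less_one assms)
qed

lemma cyc_reduced_iff_nth:
  "cyc_reduced w \<longleftrightarrow> (\<forall>i<length w. w ! (Suc i mod length w) \<noteq> inv_letter (w ! i))"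
proof (cases "w = []")
  case False
  define n where "n = length w"
  have n: "n > 0" using False by (simp add: n_def)
  have "last w \<noteq> inv_letter (hd w) \<longleftrightarrow> w ! (Suc (n - 1) mod n) \<noteq> inv_letter (w ! (n - 1))"
    using False n by (auto simp: n_def last_conv_nth hd_conv_nth)
  moreover have "w ! (Suc i mod n) = w ! Suc i" if "Suc i < n" for i
    using that by simp
  ultimately show ?thesis
    using False all_less_split_last[OF n, of "\<lambda>i. w ! (Suc i mod n) \<noteq> inv_letter (w ! i)"]
    by (simp add: cyc_reduced_def reduced_word_def n_def)
qed (simp add: cyc_reduced_def reduced_word_def)

lemma cyc_reduced_iff_cyc_nth:
  assumes "w \<noteq> []"
  shows "cyc_reduced w \<longleftrightarrow> (\<forall>i. cyc_nth w (i + 1) \<noteq> inv_letter (cyc_nth w i))"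
proof -
  define k where "k = length w"
  have k: "k > 0" using assms by (simp add: k_def)
  have step: "cyc_nth w (i + 1) = w ! (Suc (nat (i mod int k)) mod k)" for i
  proof -
    have "(i + 1) mod int k = int (Suc (nat (i mod int k)) mod k)"
      using k by (simp add: zmod_int) (metis add.commute mod_add_right_eq)
    then show ?thesis by (simp add: cyc_nth_def k_def)
  qed
  have "cyc_nth w i = w ! nat (i mod int k)" for i by (simp add: cyc_nth_def k_def)
  moreover have "nat (i mod int k) < k" for i using k by (simp add: nat_less_iff)
  moreover have "t < k \<Longrightarrow> nat (int t mod int k) = t" for t by simp
  ultimately show ?thesis unfolding cyc_reduced_iff_nth k_def[symmetric] using step
    by metis
qed

lemma cyc_reduced_rotate:
  assumes "cyc_reduced w"
  shows "cyc_reduced (rotate r w)"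
proof (cases "w = []")
  case False
  then show ?thesis using assms
    by (simp add: cyc_reduced_iff_cyc_nth cyc_nth_rotate) (metis add.assoc)
qed (use assms in \<open>simp add: cyc_reduced_def\<close>)

lemma cyc_reduced_inv_word:
  assumes "cyc_reduced w"
  shows "cyc_reduced (inv_word w)"
proof (cases "w = []")
  case False
  then have "inv_word w \<noteq> []" by (simp add: inv_word_def)
  moreover have "cyc_nth w (- 1 - i) \<noteq> inv_letter (cyc_nth w (- 1 - (i + 1)))" for i
    using assms False unfolding cyc_reduced_iff_cyc_nth[OF False]
    by (metis diff_add_cancel diff_diff_eq)
  ultimately show ?thesis using False
    by (simp add: cyc_reduced_iff_cyc_nth cyc_nth_inv_word) metis
qed (simp add: inv_word_def cyc_reduced_def)

section \<open>Words with a repeated subword\<close>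

lemma cyc_nth_rotate_mod:
  assumes "w \<noteq> []"
  shows "cyc_nth (rotate (nat (a mod int (length w))) w) i = cyc_nth w (a + i)"
  using assms by (simp add: cyc_nth_rotate) (rule cyc_nth_cong, simp add: mod_simps)

lemma card_rotate_image: "card (rotate r ` S) = card S"
  using card_image[OF inj_on_subset[OF inj_rotate subset_UNIV]] .

lemma cyc_reduced_words_rotate: "w \<in> cyc_reduced_words m k \<Longrightarrow> rotate r w \<in> cyc_reduced_words m k"
  by (auto simp: cyc_reduced_words_def cyc_reduced_rotate)

lemma eq_if_agree_outside_determined_block:
  assumes len: "length u = k" "length v = k"
    and outside: "take p u = take p v" "drop (p + s) u = drop (p + s) v"
    and det: "\<And>x. p \<le> x \<Longrightarrow> x < p + s \<Longrightarrow>
      \<sigma> x < x \<and> u ! x = F x (u ! \<sigma> x) \<and> v ! x = F x (v ! \<sigma> x)"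
  shows "u = v"
proof -
  have "x < k \<longrightarrow> u ! x = v ! x" for x
  proof (induction x rule: less_induct)
    case (less x)
    consider "x < p" | "p \<le> x" "x < p + s" | "p + s \<le> x" by linarith
    then show ?case
    proof cases
      case 1
      then have "u ! x = take p u ! x" "v ! x = take p v ! x" by simp_all
      then show ?thesis using outside(1) by simp
    next
      case 2
      with det[OF 2] less.IH[of "\<sigma> x"] show ?thesis by auto
    next
      case 3
      show ?thesis
      proof
        assume "x < k"
        with 3 len have "u ! x = drop (p + s) u ! (x - (p + s))" "v ! x = drop (p + s) v ! (x - (p + s))"
          by simp_all
        then show "u ! x = v ! x" using outside(2) by simp
      qed
    qed
  qed
  then show ?thesis using len by (simp add: nth_equalityI)
qed

lemma card_determined_block_le:
  assumes m: "m \<ge> 2" and ps: "p + s \<le> k" and S: "S \<subseteq> reduced_words m k"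
    and det: "\<And>w x. w \<in> S \<Longrightarrow> p \<le> x \<Longrightarrow> x < p + s \<Longrightarrow> \<sigma> x < x \<and> w ! x = F x (w ! \<sigma> x)"
  shows "real (card S) \<le> 4 * real (2 * m - 1) ^ (k - s)"
proof -
  define cut where "cut w = (take p w, drop (p + s) w)" for w :: "letter list"
  have "inj_on cut S"
  proof (rule inj_onI)
    fix u v assume "u \<in> S" "v \<in> S" "cut u = cut v"
    with S det show "u = v"
      by (intro eq_if_agree_outside_determined_block[of u k v p s \<sigma> F])
         (auto simp: cut_def reduced_words_def)
  qed
  moreover have "cut ` S \<subseteq> reduced_words m p \<times> reduced_words m (k - (p + s))"
    using S ps by (auto simp: cut_def reduced_words_def reduced_word_take reduced_word_drop
        dest: in_set_takeD in_set_dropD)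
  ultimately have "card S \<le> card (reduced_words m p \<times> reduced_words m (k - (p + s)))"
    by (metis card_image card_mono finite_SigmaI finite_reduced_words)
  then have "real (card S) \<le> real (card (reduced_words m p)) * real (card (reduced_words m (k - (p + s))))"
    by (simp only: card_cartesian_product of_nat_mult[symmetric] of_nat_le_iff)
  also have "\<dots> \<le> (2 * real (2 * m - 1) ^ p) * (2 * real (2 * m - 1) ^ (k - (p + s)))"
    using m by (intro mult_mono card_reduced_words_le) auto
  also have "\<dots> = 4 * real (2 * m - 1) ^ (k - s)"
    using ps by (simp add: power_add[symmetric])
  finally show ?thesis .
qed

lemma card_cyclic_repeat_le_half_shift:
  assumes m: "m \<ge> 2" and s: "1 \<le> s" "2 * s \<le> k" and ab: "a mod int k \<noteq> b mod int k"
    and close: "2 * nat ((b - a) mod int k) \<le> k"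
  shows "real (card {w\<in>cyc_reduced_words m k. \<forall>t<s. cyc_nth w (a + int t) = cyc_nth w (b + int t)})
    \<le> 4 * real (2 * m - 1) ^ (k - s)"
proof -
  define S where "S = {w\<in>cyc_reduced_words m k. \<forall>t<s. cyc_nth w (a + int t) = cyc_nth w (b + int t)}"
  \<comment> \<open>After rotating by a the two blocks start at 0 and d, and d + s \<le> k, so the letters at
    positions d, ..., d + s - 1 copy earlier ones.\<close>
  define d where "d = nat ((b - a) mod int k)"
  define r where "r = nat (a mod int k)"
  have k: "k > 0" using s by simp
  have "(b - a) mod int k \<noteq> 0" using ab by (metis mod_eq_dvd_iff dvd_eq_mod_eq_0)
  moreover have "(b - a) mod int k \<ge> 0" using k by simp
  ultimately have "(b - a) mod int k > 0" by linarith
  then have d: "0 < d" "d + s \<le> k" and int_d: "int d = (b - a) mod int k"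
    using close s by (auto simp: d_def)
  have "real (card (rotate r ` S)) \<le> 4 * real (2 * m - 1) ^ (k - s)"
  proof (rule card_determined_block_le[OF m d(2), where \<sigma> = "\<lambda>x. x - d" and F = "\<lambda>_ y. y"])
    show "rotate r ` S \<subseteq> reduced_words m k"
      using cyc_reduced_words_rotate cyc_reduced_words_subset by (fastforce simp: S_def)
  next
    fix v x assume v: "v \<in> rotate r ` S" and x: "d \<le> x" "x < d + s"
    then obtain w where w: "w \<in> S" "v = rotate r w" by auto
    have len: "length w = k" "w \<noteq> []" using w k by (auto simp: S_def cyc_reduced_words_def)
    have "v ! x = cyc_nth w (a + int x)"
      using w len x d cyc_nth_rotate_mod[OF len(2), of a] by (simp add: cyc_nth_nth[symmetric] r_def)
    also have "\<dots> = cyc_nth w (b + int (x - d))"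
      using x by (intro cyc_nth_cong)
        (simp add: len int_d add_diff_eq mod_diff_right_eq add.commute)
    also have "\<dots> = cyc_nth w (a + int (x - d))"
      using w(1) x unfolding S_def by (simp del: of_nat_diff)
    also have "\<dots> = v ! (x - d)"
      using w len x d cyc_nth_rotate_mod[OF len(2), of a] by (simp add: cyc_nth_nth[symmetric] r_def)
    finally show "x - d < x \<and> v ! x = v ! (x - d)" using d x by simp
  qed
  then show ?thesis by (simp add: S_def card_rotate_image)
qed

lemma card_cyclic_repeat_le:
  assumes m: "m \<ge> 2" and s: "1 \<le> s" "2 * s \<le> k" and ab: "a mod int k \<noteq> b mod int k"
  shows "real (card {w\<in>cyc_reduced_words m k. \<forall>t<s. cyc_nth w (a + int t) = cyc_nth w (b + int t)})
    \<le> 4 * real (2 * m - 1) ^ (k - s)"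
proof (cases "2 * nat ((b - a) mod int k) \<le> k")
  case True
  then show ?thesis using card_cyclic_repeat_le_half_shift[OF assms] by simp
next
  case False
  have k: "k > 0" using s by simp
  have "(b - a) mod int k \<noteq> 0" using ab by (metis mod_eq_dvd_iff dvd_eq_mod_eq_0)
  moreover have "(a - b) mod int k = (- (b - a)) mod int k" by simp
  ultimately have "(b - a) mod int k + (a - b) mod int k = int k"
    using k by (simp only: zmod_zminus1_eq_if) simp
  with False k have "2 * nat ((a - b) mod int k) \<le> k" by linarith
  from card_cyclic_repeat_le_half_shift[OF m s ab[symmetric] this] show ?thesis
    by (simp add: eq_commute[of "cyc_nth _ (b + _)"])
qed

lemma card_inverse_mirror_le:
  assumes m: "m \<ge> 2" and e: "e < k" and S: "S \<subseteq> reduced_words m k"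
    and mirror: "\<And>v t. v \<in> S \<Longrightarrow> t < s \<Longrightarrow> t \<le> e \<Longrightarrow> v ! t = inv_letter (v ! (e - t))"
  shows "real (card S) \<le> 4 * real (2 * m - 1) ^ (k - s)"
proof (cases "2 * s \<le> e + 1")
  case True
  show ?thesis
  proof (rule card_determined_block_le[OF m _ S, where p = "e + 1 - s" and \<sigma> = "\<lambda>x. e - x"
        and F = "\<lambda>_ y. inv_letter y"])
    show "e + 1 - s + s \<le> k" using True e by simp
  next
    fix v x assume v: "v \<in> S" and x: "e + 1 - s \<le> x" "x < e + 1 - s + s"
    then have "e - x < s" "e - x \<le> e" "e - (e - x) = x" "e - x < x" using True by linarith+
    with mirror[OF v, of "e - x"] show "e - x < x \<and> v ! x = inv_letter (v ! (e - x))"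
      by (metis inv_letter_inv_letter)
  qed
next
  case False
  \<comment> \<open>The mirror image of the middle position t = e div 2 is t or t + 1, contradicting reducedness.\<close>
  have "v \<notin> S" for v
  proof
    assume v: "v \<in> S"
    then have red: "reduced_word v" and len: "length v = k"
      using S by (auto simp: reduced_words_def)
    define t where "t = e div 2"
    have "t < s" "t \<le> e" using False by (simp_all add: t_def)
    then have mid: "v ! t = inv_letter (v ! (e - t))" using mirror[OF v] by blast
    show False
    proof (cases "e - t = t")
      case True
      then show False using mid by simp
    next
      case False
      then have "e - t = Suc t" unfolding t_def by linarith
      moreover have "Suc t < length v" using \<open>e - t = Suc t\<close> e len by simp
      ultimately show False using mid red
        by (simp add: reduced_word_def) (metis inv_letter_inv_letter)
    qed
  qed
  then have "S = {}" by blast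
  then show ?thesis by simp
qed

lemma card_cyclic_inverse_repeat_le:
  assumes m: "m \<ge> 2" and s: "1 \<le> s" "2 * s \<le> k"
  shows "real (card {w\<in>cyc_reduced_words m k. \<forall>t<s. cyc_nth w (a + int t) = inv_letter (cyc_nth w (c - int t))})
    \<le> 4 * real (2 * m - 1) ^ (k - s)"
proof -
  define S where "S = {w\<in>cyc_reduced_words m k. \<forall>t<s. cyc_nth w (a + int t) = inv_letter (cyc_nth w (c - int t))}"
  define e where "e = nat ((c - a) mod int k)"
  define r where "r = nat (a mod int k)"
  have k: "k > 0" using s by simp
  then have e: "e < k" and int_e: "int e = (c - a) mod int k" by (simp_all add: e_def nat_less_iff)
  have "real (card (rotate r ` S)) \<le> 4 * real (2 * m - 1) ^ (k - s)"
  proof (rule card_inverse_mirror_le[OF m e])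
    show "rotate r ` S \<subseteq> reduced_words m k"
      using cyc_reduced_words_rotate cyc_reduced_words_subset by (fastforce simp: S_def)
  next
    fix v t assume v: "v \<in> rotate r ` S" and t: "t < s" "t \<le> e"
    then obtain w where w: "w \<in> S" "v = rotate r w" by auto
    have len: "length w = k" "w \<noteq> []" using w k by (auto simp: S_def cyc_reduced_words_def)
    have "v ! t = cyc_nth w (a + int t)"
      using w len t s cyc_nth_rotate_mod[OF len(2), of a] by (simp add: cyc_nth_nth[symmetric] r_def)
    also have "\<dots> = inv_letter (cyc_nth w (c - int t))"
      using w t by (simp add: S_def)
    also have "cyc_nth w (c - int t) = cyc_nth w (a + int (e - t))"
    proof (rule cyc_nth_cong)
      have "(a + ((c - a) mod int k - int t)) mod int k = ((c - a) mod int k + (a - int t)) mod int k"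
        by (simp add: algebra_simps)
      also have "\<dots> = (c - int t) mod int k" by (simp add: mod_add_left_eq)
      finally show "(c - int t) mod int (length w) = (a + int (e - t)) mod int (length w)"
        using t by (simp add: len int_e)
    qed
    also have "\<dots> = v ! (e - t)"
      using w len e cyc_nth_rotate_mod[OF len(2), of a] by (simp add: cyc_nth_nth[symmetric] r_def)
    finally show "v ! t = inv_letter (v ! (e - t))" .
  qed
  then show ?thesis by (simp add: S_def card_rotate_image)
qed

section \<open>Overlapping cyclic conjugates\<close>

definition orient :: "bool \<Rightarrow> letter list \<Rightarrow> letter list" where
  "orient f w = (if f then inv_word w else w)"

text \<open>The words conjugate a f w are exactly the elements of symmetrized {w}.\<close>

definition conjugate :: "nat \<Rightarrow> bool \<Rightarrow> letter list \<Rightarrow> letter list" where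
  "conjugate a f w = rotate a (orient f w)"

lemma length_orient [simp]: "length (orient f w) = length w"
  by (simp add: orient_def inv_word_def)

lemma orient_eq_Nil_iff [simp]: "orient f w = [] \<longleftrightarrow> w = []"
  by (simp add: orient_def inv_word_def)

lemma length_conjugate [simp]: "length (conjugate a f w) = length w"
  by (simp add: conjugate_def)

lemma inj_orient: "inj (orient f)"
  by (rule inj_onI) (metis orient_def inv_word_inv_word)

lemma inj_conjugate: "inj (conjugate a f)"
  unfolding conjugate_def using inj_compose[OF inj_rotate inj_orient] by (simp add: comp_def)

lemma card_orient_image: "card (orient f ` S) = card S"
  using card_image[OF inj_on_subset[OF inj_orient subset_UNIV]] .

lemma orient_cyc_reduced_words: "w \<in> cyc_reduced_words m k \<Longrightarrow> orient f w \<in> cyc_reduced_words m k"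
  by (auto simp: orient_def cyc_reduced_words_def cyc_reduced_inv_word set_inv_word)

lemma conjugate_cyc_reduced_words: "w \<in> cyc_reduced_words m k \<Longrightarrow> conjugate a f w \<in> cyc_reduced_words m k"
  unfolding conjugate_def by (intro cyc_reduced_words_rotate orient_cyc_reduced_words)

lemma nth_conjugate:
  assumes "t < length w"
  shows "conjugate a f w ! t = cyc_nth (orient f w) (int a + int t)"
proof -
  have "orient f w \<noteq> []" using assms by (metis length_orient list.size(3) not_less0)
  then show ?thesis
    using assms cyc_nth_nth[of t "conjugate a f w"] by (simp add: cyc_nth_rotate conjugate_def)
qed

lemma cr_words_iff: "w \<in> cr_words m l \<longleftrightarrow> w \<in> cyc_reduced_words m (length w) \<and> length w \<le> l"
  by (auto simp: cr_words_def cyc_reduced_words_def alphabet_def)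

lemma finite_cr_words [simp]: "finite (cr_words m l)"
  by (rule finite_subset[OF _ finite_reduced_words_upto[of m l]])
     (auto simp: cr_words_def reduced_words_upto_def alphabet_def cyc_reduced_def)

lemma conjugate_mod_length: "conjugate (a mod length w) f w = conjugate a f w"
  using rotate_conv_mod[of a "orient f w"] by (simp add: conjugate_def)

lemma cyc_nth_orient_eq_if_take_conjugate_eq:
  assumes eq: "take s (conjugate a f w) = take s (conjugate b g w)" and t: "t < s" "t < length w"
  shows "cyc_nth (orient f w) (int a + int t) = cyc_nth (orient g w) (int b + int t)"
proof -
  have "conjugate a f w ! t = take s (conjugate a f w) ! t" using t by simp
  also have "\<dots> = conjugate b g w ! t" using eq t by simp
  finally show ?thesis using t by (simp add: nth_conjugate)
qed

lemma card_self_overlap_le: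
  assumes m: "m \<ge> 2" and s: "1 \<le> s" "2 * s \<le> k"
  shows "real (card {w\<in>cyc_reduced_words m k. conjugate a f w \<noteq> conjugate b g w \<and>
      take s (conjugate a f w) = take s (conjugate b g w)}) \<le> 4 * real (2 * m - 1) ^ (k - s)"
proof -
  define S where "S = {w\<in>cyc_reduced_words m k. conjugate a f w \<noteq> conjugate b g w \<and>
      take s (conjugate a f w) = take s (conjugate b g w)}"
  have repeat: "cyc_nth (orient f w) (int a + int t) = cyc_nth (orient g w) (int b + int t)"
    if "w \<in> S" "t < s" for w t
    using that s cyc_nth_orient_eq_if_take_conjugate_eq[of s a f w b g t]
    by (simp add: S_def cyc_reduced_words_def)
  consider "f = g" "a mod k = b mod k" | "f = g" "int a mod int k \<noteq> int b mod int k" | "f \<noteq> g"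
    by (metis of_nat_eq_iff zmod_int)
  then have "real (card (orient f ` S)) \<le> 4 * real (2 * m - 1) ^ (k - s)"
  proof cases
    case 1
    have "conjugate a f w = conjugate b g w" if "length w = k" for w
      using 1 that conjugate_mod_length[of a w f] conjugate_mod_length[of b w g] by simp
    then have "S = {}" by (auto simp: S_def cyc_reduced_words_def)
    then show ?thesis by simp
  next
    case 2
    have "orient f ` S \<subseteq> {w\<in>cyc_reduced_words m k. \<forall>t<s. cyc_nth w (int a + int t) = cyc_nth w (int b + int t)}"
      using repeat 2 orient_cyc_reduced_words by (auto simp: S_def)
    from card_mono[OF _ this] show ?thesis
      by (intro order_trans[OF _ card_cyclic_repeat_le[OF m s 2(2)]]) simp
  next
    case 3
    then have inv: "orient g w = inv_word (orient f w)" for w by (simp add: orient_def)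
    have "orient f ` S \<subseteq> {w\<in>cyc_reduced_words m k.
        \<forall>t<s. cyc_nth w (int a + int t) = inv_letter (cyc_nth w ((- 1 - int b) - int t))}"
    proof (clarify, intro conjI allI impI)
      fix w t assume w: "w \<in> S" and t: "t < s"
      then have "orient f w \<noteq> []" using s by (auto simp: S_def cyc_reduced_words_def)
      then have "cyc_nth (orient g w) (int b + int t) = inv_letter (cyc_nth (orient f w) (- 1 - int b - int t))"
        by (simp add: inv cyc_nth_inv_word diff_diff_eq)
      with repeat[OF w t] show "cyc_nth (orient f w) (int a + int t) =
          inv_letter (cyc_nth (orient f w) (- 1 - int b - int t))"
        by simp
    qed (simp add: S_def orient_cyc_reduced_words)
    from card_mono[OF _ this] show ?thesis
      by (intro order_trans[OF _ card_cyclic_inverse_repeat_le[OF m s]]) simp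
  qed
  then show ?thesis by (simp add: S_def card_orient_image)
qed

lemma card_self_overlap_words_le:
  assumes m: "m \<ge> 2" and s: "1 \<le> s" "2 * s \<le> h"
  shows "real (card {w\<in>cr_words m l. take s (conjugate a f w) = take s (conjugate b g w) \<and>
      h \<le> length w \<and> conjugate a f w \<noteq> conjugate b g w}) \<le> real (l + 1) * (4 * real (2 * m - 1) ^ (l - s))"
proof -
  define S where "S k = {w\<in>cyc_reduced_words m k. take s (conjugate a f w) = take s (conjugate b g w) \<and>
      h \<le> length w \<and> conjugate a f w \<noteq> conjugate b g w}" for k
  have "{w\<in>cr_words m l. take s (conjugate a f w) = take s (conjugate b g w) \<and>
      h \<le> length w \<and> conjugate a f w \<noteq> conjugate b g w} = (\<Union>k\<le>l. S k)"
    by (auto simp: S_def cr_words_iff cyc_reduced_words_def)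
  then have "real (card {w\<in>cr_words m l. take s (conjugate a f w) = take s (conjugate b g w) \<and>
      h \<le> length w \<and> conjugate a f w \<noteq> conjugate b g w}) \<le> (\<Sum>k\<le>l. real (card (S k)))"
    by (metis card_UN_le finite_atMost of_nat_le_iff of_nat_sum)
  also have "\<dots> \<le> (\<Sum>k\<le>l. 4 * real (2 * m - 1) ^ (l - s))"
  proof (rule sum_mono)
    fix k assume k: "k \<in> {..l}"
    show "real (card (S k)) \<le> 4 * real (2 * m - 1) ^ (l - s)"
    proof (cases "h \<le> k")
      case True
      have "S k \<subseteq> {w\<in>cyc_reduced_words m k. conjugate a f w \<noteq> conjugate b g w \<and>
          take s (conjugate a f w) = take s (conjugate b g w)}" by (auto simp: S_def)
      then have "real (card (S k)) \<le> real (card {w\<in>cyc_reduced_words m k. conjugate a f w \<noteq> conjugate b g w \<and>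
          take s (conjugate a f w) = take s (conjugate b g w)})"
        by (simp add: card_mono)
      also have "\<dots> \<le> 4 * real (2 * m - 1) ^ (k - s)"
        using True s by (intro card_self_overlap_le[OF m s(1)]) simp
      also have "\<dots> \<le> 4 * real (2 * m - 1) ^ (l - s)"
        using m k by (intro mult_left_mono power_increasing) auto
      finally show ?thesis .
    next
      case False
      then have "S k = {}" by (auto simp: S_def cyc_reduced_words_def)
      then show ?thesis by simp
    qed
  qed
  finally show ?thesis by simp
qed

lemma card_conjugate_prefix_le:
  assumes m: "m \<ge> 2"
  shows "real (card {w\<in>cr_words m l. take s (conjugate b g w) = z}) \<le> 4 * real (2 * m - 1) ^ (l - s)"
proof -
  define S where "S = {w\<in>cr_words m l. take s (conjugate b g w) = z}"
  have "inj_on (\<lambda>w. drop s (conjugate b g w)) S"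
  proof (rule inj_onI)
    fix u v assume "u \<in> S" "v \<in> S" "drop s (conjugate b g u) = drop s (conjugate b g v)"
    moreover have "take s (conjugate b g u) = take s (conjugate b g v)"
      using \<open>u \<in> S\<close> \<open>v \<in> S\<close> by (simp add: S_def)
    ultimately have "conjugate b g u = conjugate b g v" by (metis append_take_drop_id)
    then show "u = v" using inj_conjugate by (metis injD)
  qed
  moreover have "(\<lambda>w. drop s (conjugate b g w)) ` S \<subseteq> reduced_words_upto m (l - s)"
  proof clarify
    fix w assume "w \<in> S"
    then have "conjugate b g w \<in> cyc_reduced_words m (length w)" "length w \<le> l"
      by (auto simp: S_def cr_words_iff conjugate_cyc_reduced_words)
    then show "drop s (conjugate b g w) \<in> reduced_words_upto m (l - s)"
      by (auto simp: cyc_reduced_words_def reduced_words_upto_def cyc_reduced_def reduced_word_drop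
          dest: in_set_dropD)
  qed
  ultimately have "card S \<le> card (reduced_words_upto m (l - s))"
    by (metis card_image card_mono finite_reduced_words_upto)
  then have "real (card S) \<le> real (card (reduced_words_upto m (l - s)))" by simp
  also have "\<dots> \<le> 4 * real (2 * m - 1) ^ (l - s)" by (rule card_reduced_words_upto_le[OF m])
  finally show ?thesis by (simp add: S_def)
qed

lemma hd_butlast_eq: "length w \<ge> 2 \<Longrightarrow> hd (butlast w) = hd w"
  by (cases w) auto

lemma card_reduced_words_le_cyc_reduced:
  assumes l: "l \<ge> 2"
  shows "card (reduced_words m l) \<le> card (cyc_reduced_words m l) + card (reduced_words m (l - 1))"
proof -
  define X where "X = {w\<in>reduced_words m l. last w = inv_letter (hd w)}"
  \<comment> \<open>A word in X is determined by its butlast: its last letter is the inverse of its first.\<close>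
  have "inj_on butlast X"
  proof (rule inj_onI)
    fix u v assume "u \<in> X" "v \<in> X" and eq: "butlast u = butlast v"
    then have len: "length u = l" "length v = l" by (auto simp: X_def reduced_words_def)
    then have "hd u = hd (butlast u)" "hd v = hd (butlast v)"
      using l hd_butlast_eq by metis+
    with eq \<open>u \<in> X\<close> \<open>v \<in> X\<close> have "last u = last v" by (simp add: X_def)
    moreover have "u \<noteq> []" "v \<noteq> []" using len l by auto
    ultimately show "u = v" using eq by (metis append_butlast_last_id)
  qed
  moreover have "butlast ` X \<subseteq> reduced_words m (l - 1)"
    by (auto simp: X_def reduced_words_def reduced_word_take butlast_conv_take dest: in_set_takeD)
  ultimately have card_X: "card X \<le> card (reduced_words m (l - 1))"
    using card_image card_mono[OF finite_reduced_words] by metis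
  have "reduced_words m l \<subseteq> cyc_reduced_words m l \<union> X"
    by (auto simp: reduced_words_def cyc_reduced_words_def X_def cyc_reduced_def)
  moreover have "finite X" by (simp add: X_def)
  ultimately have "card (reduced_words m l) \<le> card (cyc_reduced_words m l \<union> X)"
    by (intro card_mono) auto
  also have "\<dots> \<le> card (cyc_reduced_words m l) + card X" by (rule card_Un_le)
  finally have "card (reduced_words m l) \<le> card (cyc_reduced_words m l) + card X" .
  with card_X show ?thesis by linarith
qed

lemma card_cr_words_ge:
  assumes m: "m \<ge> 2" and l: "l \<ge> 2"
  shows "real (2 * m - 1) ^ l / 2 \<le> real (card (cr_words m l))"
proof -
  define q where "q = real (2 * m - 1)"
  have q: "q \<ge> 3" using m by (simp add: q_def)
  have "cyc_reduced_words m l \<subseteq> cr_words m l" by (auto simp: cr_words_iff cyc_reduced_words_def)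
  then have "card (cyc_reduced_words m l) \<le> card (cr_words m l)" by (simp add: card_mono)
  with card_reduced_words_le_cyc_reduced[OF l, of m]
  have "real (card (reduced_words m l)) - real (card (reduced_words m (l - 1))) \<le> real (card (cr_words m l))"
    by linarith
  moreover have "real (card (reduced_words m k)) = (q + 1) * q ^ (k - 1)" if "k \<ge> 1" for k
    using that m by (simp add: card_reduced_words q_def of_nat_diff)
  moreover obtain j where j: "l = j + 2" using l le_Suc_ex by (metis add.commute)
  ultimately have "(q + 1) * q ^ (j + 1) - (q + 1) * q ^ j \<le> real (card (cr_words m l))"
    by simp
  moreover have "(q + 1) * q ^ (j + 1) - (q + 1) * q ^ j = (q * q - 1) * q ^ j"
    by (simp add: algebra_simps)
  moreover have "q * q / 2 \<le> q * q - 1" using q mult_mono[of 3 q 3 q] by simp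
  then have "(q * q / 2) * q ^ j \<le> (q * q - 1) * q ^ j"
    using q by (intro mult_right_mono) auto
  ultimately show ?thesis by (simp add: q_def j power_add power2_eq_square)
qed

definition insert_at :: "nat \<Rightarrow> 'a \<Rightarrow> 'a list \<Rightarrow> 'a list" where
  "insert_at j y xs = take j xs @ y # drop j xs"

lemma insert_at_nth_same: "j \<le> length xs \<Longrightarrow> insert_at j y xs ! j = y"
  by (simp add: insert_at_def nth_append)

lemma insert_at_nth_other:
  "i \<noteq> j \<Longrightarrow> j \<le> length xs \<Longrightarrow> insert_at j y xs ! i = (if i < j then xs ! i else xs ! (i - 1))"
  by (auto simp: insert_at_def nth_append nth_Cons')

lemma insert_at_remove_nth: "j < length xs \<Longrightarrow> insert_at j (xs ! j) (take j xs @ drop (Suc j) xs) = xs"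
  by (simp add: insert_at_def id_take_nth_drop[symmetric])

lemma card_lists_by_coordinate_le:
  assumes j: "j < n" and W: "finite W"
    and bound: "\<And>xs. length xs = n - 1 \<Longrightarrow> set xs \<subseteq> W \<Longrightarrow> real (card {y\<in>W. Q (insert_at j y xs)}) \<le> M"
  shows "real (card {ys. length ys = n \<and> set ys \<subseteq> W \<and> Q ys}) \<le> real (card W) ^ (n - 1) * M"
proof -
  define T where "T = {xs. set xs \<subseteq> W \<and> length xs = n - 1}"
  define S where "S = {ys. length ys = n \<and> set ys \<subseteq> W \<and> Q ys}"
  define split where "split ys = (take j ys @ drop (Suc j) ys, ys ! j)" for ys :: "'a list"
  have inj: "inj_on split S"
  proof (rule inj_onI)
    fix u v assume "u \<in> S" "v \<in> S" and eq: "split u = split v"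
    then have "j < length u" "j < length v" using j by (simp_all add: S_def)
    then have "u = insert_at j (snd (split u)) (fst (split u))" "v = insert_at j (snd (split v)) (fst (split v))"
      by (simp_all only: split_def fst_conv snd_conv insert_at_remove_nth)
    with eq show "u = v" by simp
  qed
  have sub: "split ` S \<subseteq> Sigma T (\<lambda>xs. {y\<in>W. Q (insert_at j y xs)})"
  proof
    fix z assume "z \<in> split ` S"
    then obtain ys where "ys \<in> S" "z = split ys" by auto
    then have "length ys = n" "set ys \<subseteq> W" "Q ys" by (auto simp: S_def)
    with j \<open>z = split ys\<close> show "z \<in> Sigma T (\<lambda>xs. {y\<in>W. Q (insert_at j y xs)})"
      by (auto simp: T_def split_def insert_at_remove_nth dest: in_set_takeD in_set_dropD)
  qed
  have "finite T" unfolding T_def by (rule finite_lists_length_eq[OF W])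
  have "card S = card (split ` S)" using card_image[OF inj] by simp
  also have "\<dots> \<le> card (Sigma T (\<lambda>xs. {y\<in>W. Q (insert_at j y xs)}))"
    using sub \<open>finite T\<close> W by (intro card_mono) auto
  also have "\<dots> = (\<Sum>xs\<in>T. card {y\<in>W. Q (insert_at j y xs)})"
    using \<open>finite T\<close> W by (intro card_SigmaI) auto
  finally have "real (card S) \<le> (\<Sum>xs\<in>T. real (card {y\<in>W. Q (insert_at j y xs)}))"
    by (metis of_nat_le_iff of_nat_sum)
  also have "\<dots> \<le> (\<Sum>xs\<in>T. M)" by (rule sum_mono) (auto simp: T_def intro: bound)
  also have "\<dots> = real (card W) ^ (n - 1) * M"
    unfolding T_def by (simp add: card_lists_length_eq[OF W])
  finally show ?thesis by (simp add: S_def)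
qed

section \<open>The union bound\<close>

text \<open>For i = j the relator must be long: overlaps inside short relators are counted separately.\<close>

definition overlap_event ::
    "nat \<Rightarrow> nat \<Rightarrow> nat \<Rightarrow> nat \<Rightarrow> nat \<Rightarrow> nat \<Rightarrow> bool \<Rightarrow> bool \<Rightarrow> letter list list \<Rightarrow> bool" where
  "overlap_event s h i j a b f g rs \<longleftrightarrow>
     take s (conjugate a f (rs ! i)) = take s (conjugate b g (rs ! j)) \<and>
     (i = j \<longrightarrow> h \<le> length (rs ! i) \<and> conjugate a f (rs ! i) \<noteq> conjugate b g (rs ! i))"

lemma symmetrized_conjugate:
  assumes "u \<in> symmetrized R"
  obtains r a f where "r \<in> R" "a < length r \<or> r = []" "u = conjugate a f r"
proof -
  have "\<exists>r\<in>R. \<exists>f k. u = conjugate k f r"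
    using assms unfolding symmetrized_def cyclic_conjugates_def conjugate_def orient_def
    by (auto intro: exI[of _ True] exI[of _ False])
  then obtain r k f where r: "r \<in> R" "u = conjugate k f r" by blast
  moreover note conjugate_mod_length[of k r f, symmetric]
  ultimately show ?thesis using that[of r "k mod length r" f] by (cases r) auto
qed

lemma take_prefix_eq: "prefix p u \<Longrightarrow> s \<le> length p \<Longrightarrow> take s u = take s p"
  by (auto simp: prefix_def)

lemma overlap_event_or_short_relator:
  fixes lam :: real
  assumes h: "0 < h" and lam: "0 \<le> lam" and s: "s = nat \<lceil>lam * real h\<rceil>"
    and rs: "length rs = n" "set rs \<subseteq> cr_words m l" and nsc: "\<not> small_cancellation lam (set rs)"
  shows "(\<exists>i<n. \<exists>j<n. \<exists>a<l. \<exists>b<l. \<exists>f g. overlap_event s h i j a b f g rs) \<or> (\<exists>i<n. length (rs ! i) < h)"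
proof (rule disjCI)
  assume "\<not> (\<exists>i<n. length (rs ! i) < h)"
  then have long: "h \<le> length (rs ! i)" if "i < n" for i using that by (meson not_less)
  obtain u v p where uv: "u \<in> symmetrized (set rs)" "v \<in> symmetrized (set rs)" "u \<noteq> v"
    and p: "prefix p u" "prefix p v" and pl: "lam * real (min (length u) (length v)) \<le> real (length p)"
    using nsc unfolding small_cancellation_def by (auto simp: not_less)
  obtain r1 a f where r1: "r1 \<in> set rs" "a < length r1 \<or> r1 = []" "u = conjugate a f r1"
    using symmetrized_conjugate[OF uv(1)] .
  obtain r2 b g where r2: "r2 \<in> set rs" "b < length r2 \<or> r2 = []" "v = conjugate b g r2"
    using symmetrized_conjugate[OF uv(2)] .
  obtain i j where ij: "i < n" "rs ! i = r1" "j < n" "rs ! j = r2"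
    using r1(1) r2(1) rs(1) by (metis in_set_conv_nth)
  have len: "h \<le> length r1" "h \<le> length r2" "length r1 \<le> l" "length r2 \<le> l"
    using long ij r1(1) r2(1) rs(2) by (auto simp: cr_words_def)
  with h r1(2) r2(2) have ab: "a < l" "b < l" by auto
  have "lam * real h \<le> lam * real (min (length u) (length v))"
    using len r1(3) r2(3) lam by (intro mult_left_mono) auto
  with pl have "s \<le> length p" using s by (simp add: nat_le_iff ceiling_le_iff)
  then have "take s u = take s v" using p by (simp add: take_prefix_eq)
  with uv(3) ij r1(3) r2(3) len have "overlap_event s h i j a b f g rs"
    by (auto simp: overlap_event_def)
  with ij ab show "\<exists>i<n. \<exists>j<n. \<exists>a<l. \<exists>b<l. \<exists>f g. overlap_event s h i j a b f g rs" by blast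
qed

lemma card_short_relator_le:
  assumes m: "m \<ge> 2" and i: "i < n"
  shows "real (card {rs. length rs = n \<and> set rs \<subseteq> cr_words m l \<and> length (rs ! i) < h})
    \<le> real (card (cr_words m l)) ^ (n - 1) * (4 * real (2 * m - 1) ^ h)"
proof (rule card_lists_by_coordinate_le[OF i finite_cr_words])
  fix xs :: "letter list list" assume "length xs = n - 1"
  with i have "{y\<in>cr_words m l. length (insert_at i y xs ! i) < h} \<subseteq> reduced_words_upto m h"
    by (auto simp: insert_at_nth_same cr_words_def reduced_words_upto_def alphabet_def cyc_reduced_def)
  then have "real (card {y\<in>cr_words m l. length (insert_at i y xs ! i) < h})
      \<le> real (card (reduced_words_upto m h))"
    by (simp add: card_mono)
  also have "\<dots> \<le> 4 * real (2 * m - 1) ^ h" by (rule card_reduced_words_upto_le[OF m])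
  finally show "real (card {y\<in>cr_words m l. length (insert_at i y xs ! i) < h})
      \<le> 4 * real (2 * m - 1) ^ h" .
qed

lemma card_overlap_event_le:
  assumes m: "m \<ge> 2" and s: "1 \<le> s" "2 * s \<le> h" and ij: "i < n" "j < n"
  shows "real (card {rs. length rs = n \<and> set rs \<subseteq> cr_words m l \<and> overlap_event s h i j a b f g rs})
    \<le> real (card (cr_words m l)) ^ (n - 1) * (real (l + 1) * (4 * real (2 * m - 1) ^ (l - s)))"
proof (rule card_lists_by_coordinate_le[OF ij(2) finite_cr_words])
  fix xs :: "letter list list" assume "length xs = n - 1"
  with ij have j: "j \<le> length xs" by simp
  show "real (card {y\<in>cr_words m l. overlap_event s h i j a b f g (insert_at j y xs)})
      \<le> real (l + 1) * (4 * real (2 * m - 1) ^ (l - s))"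
  proof (cases "i = j")
    case True
    then have "{y\<in>cr_words m l. overlap_event s h i j a b f g (insert_at j y xs)} =
        {w\<in>cr_words m l. take s (conjugate a f w) = take s (conjugate b g w) \<and>
          h \<le> length w \<and> conjugate a f w \<noteq> conjugate b g w}"
      by (simp add: overlap_event_def insert_at_nth_same[OF j])
    then show ?thesis using card_self_overlap_words_le[OF m s] by simp
  next
    case False
    define z where "z = take s (conjugate a f (if i < j then xs ! i else xs ! (i - 1)))"
    have "{y\<in>cr_words m l. overlap_event s h i j a b f g (insert_at j y xs)} =
        {w\<in>cr_words m l. take s (conjugate b g w) = z}"
      using False by (auto simp: overlap_event_def insert_at_nth_same[OF j] insert_at_nth_other[OF False j] z_def)
    then have "real (card {y\<in>cr_words m l. overlap_event s h i j a b f g (insert_at j y xs)})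
        \<le> 4 * real (2 * m - 1) ^ (l - s)"
      using card_conjugate_prefix_le[OF m] by simp
    also have "\<dots> \<le> real (l + 1) * (4 * real (2 * m - 1) ^ (l - s))"
      using mult_right_mono[of 1 "real (l + 1)" "4 * real (2 * m - 1) ^ (l - s)"] by simp
    finally show ?thesis .
  qed
qed

lemma real_card_Un_UN_le:
  assumes "finite I" "finite J"
  shows "real (card ((\<Union>i\<in>I. A i) \<union> (\<Union>j\<in>J. B j)))
    \<le> (\<Sum>i\<in>I. real (card (A i))) + (\<Sum>j\<in>J. real (card (B j)))"
proof -
  have "card ((\<Union>i\<in>I. A i) \<union> (\<Union>j\<in>J. B j)) \<le> card (\<Union>i\<in>I. A i) + card (\<Union>j\<in>J. B j)"
    by (rule card_Un_le)
  also have "\<dots> \<le> (\<Sum>i\<in>I. card (A i)) + (\<Sum>j\<in>J. card (B j))"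
    using assms by (intro add_mono card_UN_le)
  finally show ?thesis by (metis of_nat_add of_nat_le_iff of_nat_sum)
qed

lemma card_not_small_cancellation_le:
  fixes lam :: real
  assumes m: "m \<ge> 2" and s: "1 \<le> s" "2 * s \<le> h" and lam: "0 \<le> lam"
    and s_def: "s = nat \<lceil>lam * real h\<rceil>"
  shows "real (card {rs. length rs = n \<and> set rs \<subseteq> cr_words m l \<and> \<not> small_cancellation lam (set rs)})
    \<le> real n * (real (card (cr_words m l)) ^ (n - 1) * (4 * real (2 * m - 1) ^ h))
      + real (4 * n * n * l * l) *
          (real (card (cr_words m l)) ^ (n - 1) * (real (l + 1) * (4 * real (2 * m - 1) ^ (l - s))))"
proof -
  define tuples where "tuples P = {rs. length rs = n \<and> set rs \<subseteq> cr_words m l \<and> P rs}"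
    for P :: "letter list list \<Rightarrow> bool"
  define Short where "Short i = tuples (\<lambda>rs. length (rs ! i) < h)" for i
  define Idx where "Idx = {..<n} \<times> {..<n} \<times> {..<l} \<times> {..<l} \<times> (UNIV :: bool set) \<times> (UNIV :: bool set)"
  define Ev where "Ev = (\<lambda>(i, j, a, b, f, g). tuples (overlap_event s h i j a b f g))"
  define N where "N = real (card (cr_words m l))"
  have fin: "finite (tuples P)" for P
    by (rule finite_subset[OF _ finite_lists_length_eq[OF finite_cr_words, of m l n]])
       (auto simp: tuples_def)
  have card_Idx: "card Idx = 4 * n * n * l * l"
  proof -
    have "card ((UNIV :: bool set) \<times> (UNIV :: bool set)) = 4"
      by (simp only: card_cartesian_product card_UNIV_bool)
    then show ?thesis unfolding Idx_def card_cartesian_product by simp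
  qed
  have "tuples (\<lambda>rs. \<not> small_cancellation lam (set rs)) \<subseteq> (\<Union>i<n. Short i) \<union> (\<Union>\<iota>\<in>Idx. Ev \<iota>)"
  proof
    fix rs assume "rs \<in> tuples (\<lambda>rs. \<not> small_cancellation lam (set rs))"
    then have rs: "length rs = n" "set rs \<subseteq> cr_words m l" "\<not> small_cancellation lam (set rs)"
      by (simp_all add: tuples_def)
    have "0 < h" using s by simp
    from overlap_event_or_short_relator[OF this lam s_def rs]
    show "rs \<in> (\<Union>i<n. Short i) \<union> (\<Union>\<iota>\<in>Idx. Ev \<iota>)"
      using rs by (auto simp: Short_def Idx_def Ev_def tuples_def)
  qed
  then have "real (card (tuples (\<lambda>rs. \<not> small_cancellation lam (set rs))))
      \<le> real (card ((\<Union>i<n. Short i) \<union> (\<Union>\<iota>\<in>Idx. Ev \<iota>)))"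
    by (intro of_nat_mono card_mono)
       (auto simp: Short_def Ev_def Idx_def fin split: prod.splits)
  also have "\<dots> \<le> (\<Sum>i<n. real (card (Short i))) + (\<Sum>\<iota>\<in>Idx. real (card (Ev \<iota>)))"
    by (rule real_card_Un_UN_le) (simp_all add: Idx_def)
  also have "\<dots> \<le> (\<Sum>i<n. N ^ (n - 1) * (4 * real (2 * m - 1) ^ h))
      + (\<Sum>\<iota>\<in>Idx. N ^ (n - 1) * (real (l + 1) * (4 * real (2 * m - 1) ^ (l - s))))"
  proof (intro add_mono sum_mono)
    fix i assume "i \<in> {..<n}"
    then show "real (card (Short i)) \<le> N ^ (n - 1) * (4 * real (2 * m - 1) ^ h)"
      unfolding Short_def tuples_def N_def by (intro card_short_relator_le[OF m]) simp
  next
    fix \<iota> assume "\<iota> \<in> Idx"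
    then obtain i j a b f g where "\<iota> = (i, j, a, b, f, g)" "i < n" "j < n" by (auto simp: Idx_def)
    then show "real (card (Ev \<iota>)) \<le> N ^ (n - 1) * (real (l + 1) * (4 * real (2 * m - 1) ^ (l - s)))"
      unfolding Ev_def tuples_def N_def using card_overlap_event_le[OF m s] by simp
  qed
  finally show ?thesis unfolding tuples_def N_def card_Idx[symmetric] by simp
qed

lemma rel_prob_le_one: "rel_prob m n l P \<le> 1"
proof -
  have "card {rs. length rs = n \<and> set rs \<subseteq> cr_words m l \<and> P rs}
      \<le> card {rs. length rs = n \<and> set rs \<subseteq> cr_words m l}"
    by (rule card_mono) (auto intro: finite_subset[OF _ finite_lists_length_eq[OF finite_cr_words]])
  then show ?thesis by (simp add: rel_prob_def divide_le_eq_1) arith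
qed

lemma rel_prob_eq_one_minus:
  assumes "cr_words m l \<noteq> {}"
  shows "rel_prob m n l P =
    1 - real (card {rs. length rs = n \<and> set rs \<subseteq> cr_words m l \<and> \<not> P rs}) / real (card (cr_words m l)) ^ n"
proof -
  define good where "good = {rs. length rs = n \<and> set rs \<subseteq> cr_words m l \<and> P rs}"
  define bad where "bad = {rs. length rs = n \<and> set rs \<subseteq> cr_words m l \<and> \<not> P rs}"
  have all: "{rs. length rs = n \<and> set rs \<subseteq> cr_words m l} = good \<union> bad"
    by (auto simp: good_def bad_def)
  have fin: "finite {rs. length rs = n \<and> set rs \<subseteq> cr_words m l}"
    using finite_lists_length_eq[OF finite_cr_words] by (simp add: conj_commute)
  have card_all: "card {rs. length rs = n \<and> set rs \<subseteq> cr_words m l} = card (cr_words m l) ^ n"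
    using card_lists_length_eq[OF finite_cr_words] by (simp add: conj_commute)
  have "card (good \<union> bad) = card good + card bad"
    using fin unfolding all by (intro card_Un_disjoint) (auto simp: good_def bad_def)
  then have sum: "real (card good) + real (card bad) = real (card (cr_words m l)) ^ n"
    using all card_all by (metis of_nat_add of_nat_power)
  have "real (card (cr_words m l)) ^ n \<noteq> 0" using assms by (simp add: card_gt_0_iff)
  moreover have "real (card good) = real (card (cr_words m l)) ^ n - real (card bad)" using sum by simp
  ultimately have "real (card good) / real (card (cr_words m l)) ^ n = 1 - real (card bad) / real (card (cr_words m l)) ^ n"
    by (simp add: diff_divide_distrib)
  then show ?thesis by (simp add: rel_prob_def card_all good_def bad_def)
qed

lemma divide_power_le_divide:
  fixes b X N :: real
  assumes N: "N > 0" and n: "n > 0" and b: "b \<le> N ^ (n - 1) * X"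
  shows "b / N ^ n \<le> X / N"
proof -
  have "b / N ^ (n - 1) \<le> X" using b N by (simp add: divide_le_eq mult.commute)
  then have "b / N ^ (n - 1) / N \<le> X / N" using N by (intro divide_right_mono) simp_all
  moreover have "N ^ n = N ^ (n - 1) * N" using n by (simp add: power_eq_if)
  ultimately show ?thesis by (simp only: divide_divide_eq_left)
qed

lemma rel_prob_small_cancellation_ge:
  fixes lam :: real
  assumes m: "m \<ge> 2" and l: "l \<ge> 2" and s: "1 \<le> s" "2 * s \<le> h" "s + h \<le> l"
    and lam: "0 \<le> lam" and s_def: "s = nat \<lceil>lam * real h\<rceil>"
  shows "1 - (8 * real n + 32 * real n ^ 2 * real l ^ 2 * real (l + 1)) / real (2 * m - 1) ^ s
    \<le> rel_prob m n l (\<lambda>rs. small_cancellation lam (set rs))"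
proof -
  define q where "q = real (2 * m - 1)"
  define N where "N = real (card (cr_words m l))"
  have q: "q \<ge> 3" using m by (simp add: q_def)
  have N: "q ^ l / 2 \<le> N" using card_cr_words_ge[OF m l] by (simp add: N_def q_def)
  moreover have "q ^ l > 0" using q by simp
  ultimately have "N > 0" by linarith
  define bad where "bad = real (card {rs. length rs = n \<and> set rs \<subseteq> cr_words m l \<and>
      \<not> small_cancellation lam (set rs)})"
  define X where "X = (8 * real n + 32 * real n ^ 2 * real l ^ 2 * real (l + 1)) * q ^ (l - s) / 2"
  have "bad \<le> N ^ (n - 1) * (real n * (4 * q ^ h) + real (4 * n * n * l * l) * (real (l + 1) * (4 * q ^ (l - s))))"
    using card_not_small_cancellation_le[OF m s(1,2) lam s_def, of n l]
    by (simp add: bad_def N_def q_def algebra_simps)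
  also have "\<dots> \<le> N ^ (n - 1) * X"
  proof (rule mult_left_mono)
    have "q ^ h \<le> q ^ (l - s)" using q s by (intro power_increasing) auto
    then have "real n * (4 * q ^ h) \<le> real n * (4 * q ^ (l - s))" by (simp add: mult_left_mono)
    then show "real n * (4 * q ^ h) + real (4 * n * n * l * l) * (real (l + 1) * (4 * q ^ (l - s))) \<le> X"
      by (simp add: X_def algebra_simps power2_eq_square)
  qed (use \<open>N > 0\<close> in simp)
  finally have bad_le: "bad \<le> N ^ (n - 1) * X" .
  have "bad / N ^ n \<le> X / N"
  proof (cases n)
    case 0
    then show ?thesis using bad_le by (simp add: X_def)
  next
    case Suc
    then show ?thesis using divide_power_le_divide[OF \<open>N > 0\<close> _ bad_le] by simp
  qed
  also have "\<dots> = (8 * real n + 32 * real n ^ 2 * real l ^ 2 * real (l + 1)) * q ^ (l - s) / (2 * N)"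
    by (simp add: X_def)
  also have "\<dots> \<le> (8 * real n + 32 * real n ^ 2 * real l ^ 2 * real (l + 1)) * q ^ (l - s) / q ^ l"
    using N q \<open>N > 0\<close> by (intro divide_left_mono mult_nonneg_nonneg) auto
  also have "\<dots> = (8 * real n + 32 * real n ^ 2 * real l ^ 2 * real (l + 1)) / q ^ s"
  proof -
    have "q ^ l = q ^ (l - s) * q ^ s" using s by (simp add: power_add[symmetric])
    then show ?thesis using q by simp
  qed
  finally show ?thesis
    using rel_prob_eq_one_minus[of m l n] \<open>N > 0\<close> by (simp add: bad_def N_def q_def card_gt_0_iff)
qed

section \<open>Asymptotics\<close>

lemma num_relators_le:
  assumes "C > 0" "K \<ge> 0" "l \<ge> 1"
  shows "real (num_relators C K l) \<le> (C + 1) * real l powr K"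
proof -
  have one: "real l powr K \<ge> 1" using assms by (intro ge_one_powr_ge_zero) auto
  have "C * real l powr K \<ge> 0" using assms by simp
  then have "real (num_relators C K l) = of_int (round (C * real l powr K))"
    by (simp add: num_relators_def round_def)
  also have "\<dots> \<le> C * real l powr K + 1 / 2" by (rule of_int_round_le)
  finally show ?thesis using one by (simp add: algebra_simps)
qed

lemma powr_le_exp_mult_power:
  fixes c q :: real
  assumes q: "q > 1" and c: "c \<ge> 0" and l: "l \<ge> 1"
    and s: "2 * c * ln (real l) / (real l * ln q) * real (l div 2) \<le> real s"
  shows "real l powr c \<le> exp c * q ^ s"
proof -
  have lq: "ln q > 0" using q by simp
  have ln_l: "0 \<le> ln (real l)" "ln (real l) \<le> real l" using l by (auto intro: ln_bound)
  have "c * ln (real l) * (real l - 1) \<le> c * ln (real l) * (2 * real (l div 2))"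
    using c ln_l by (intro mult_left_mono) (linarith, simp)
  also have "\<dots> = 2 * c * ln (real l) / (real l * ln q) * real (l div 2) * (real l * ln q)"
    using l lq by (simp add: field_simps)
  also have "\<dots> \<le> real s * (real l * ln q)"
    using s l lq by (intro mult_right_mono) auto
  finally have "c * ln (real l) * (real l - 1) \<le> real s * ln q * real l" by (simp add: ac_simps)
  moreover have "c * ln (real l) \<le> c * real l" using c ln_l by (simp add: mult_left_mono)
  ultimately have "c * ln (real l) * real l \<le> (c + real s * ln q) * real l"
    by (simp add: algebra_simps)
  then have "c * ln (real l) \<le> c + real s * ln q" using l by simp
  then have "exp (c * ln (real l)) \<le> exp (c + real s * ln q)" by simp
  also have "\<dots> = exp c * q ^ s"
    using q by (simp add: exp_add exp_of_nat_mult)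
  finally show ?thesis using l by (simp add: powr_def mult.commute)
qed

lemma failure_numerator_le:
  fixes C K :: real
  assumes C: "C > 0" and K: "K \<ge> 0" and l: "l \<ge> 1"
  shows "8 * real (num_relators C K l) + 32 * real (num_relators C K l) ^ 2 * real l ^ 2 * real (l + 1)
    \<le> (8 * (C + 1) + 64 * (C + 1) ^ 2) * real l powr (2 * K + 3)"
proof -
  define n where "n = real (num_relators C K l)"
  define D where "D = (C + 1) * real l powr K"
  have L: "real l \<ge> 1" using l by simp
  have n: "0 \<le> n" "n \<le> D" using num_relators_le[OF C K l] by (simp_all add: n_def D_def)
  have small: "8 * n \<le> 8 * (C + 1) * real l powr (2 * K + 3)"
  proof -
    have "real l powr K \<le> real l powr (2 * K + 3)" using L K by (intro powr_mono) auto
    then have "D \<le> (C + 1) * real l powr (2 * K + 3)" using C by (simp add: D_def)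
    with n show ?thesis by (simp add: algebra_simps)
  qed
  have large: "32 * n ^ 2 * real l ^ 2 * real (l + 1) \<le> 64 * (C + 1) ^ 2 * real l powr (2 * K + 3)"
  proof -
    have "32 * n ^ 2 * real l ^ 2 * real (l + 1) \<le> 32 * D ^ 2 * real l ^ 2 * (2 * real l)"
      using n L by (intro mult_mono power_mono) auto
    also have "\<dots> = 64 * (C + 1) ^ 2 * ((real l powr K) ^ 2 * real l ^ 3)"
      by (simp add: D_def power_mult_distrib power2_eq_square power3_eq_cube)
    also have "(real l powr K) ^ 2 * real l ^ 3 = real l powr (2 * K + 3)"
    proof -
      have "(real l powr K) ^ 2 = real l powr (2 * K)" "real l ^ 3 = real l powr 3"
        using L by (simp_all add: power2_eq_square powr_add[symmetric] powr_realpow)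
      then show ?thesis by (simp add: powr_add)
    qed
    finally show ?thesis .
  qed
  from add_mono[OF small large] show ?thesis by (simp only: n_def distrib_right)
qed

lemma failure_bound_le:
  fixes C K q :: real
  assumes C: "C > 0" and K: "K \<ge> 0" and q: "q > 1" and l: "l \<ge> 1"
    and s: "6 * (K + 2) * ln (real l) / (real l * ln q) * real (l div 2) \<le> real s"
  shows "(8 * real (num_relators C K l) + 32 * real (num_relators C K l) ^ 2 * real l ^ 2 * real (l + 1)) / q ^ s
    \<le> (8 * (C + 1) + 64 * (C + 1) ^ 2) * exp (3 * (K + 2)) / real l"
proof -
  define A where "A = 8 * (C + 1) + 64 * (C + 1) ^ 2"
  define c where "c = 3 * (K + 2)"
  have L: "real l \<ge> 1" using l by simp
  have A: "A \<ge> 0" using C by (simp add: A_def)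
  have pos: "q ^ s > 0" "real l powr c > 0" using q L by simp_all
  have qs: "real l powr c \<le> exp c * q ^ s"
    using s by (intro powr_le_exp_mult_power[OF q _ l]) (auto simp: c_def K)
  have "(8 * real (num_relators C K l) + 32 * real (num_relators C K l) ^ 2 * real l ^ 2 * real (l + 1)) / q ^ s
      \<le> A * real l powr (2 * K + 3) / q ^ s"
    using failure_numerator_le[OF C K l] q by (intro divide_right_mono) (simp_all add: A_def)
  also have "\<dots> \<le> A * real l powr (2 * K + 3) / (real l powr c / exp c)"
    using qs pos A by (intro divide_left_mono) (simp_all add: field_simps)
  also have "\<dots> = A * exp c * real l powr (2 * K + 3 - c)"
    using L by (simp add: powr_diff field_simps)
  also have "\<dots> \<le> A * exp c * real l powr (- 1)"
    using L K A by (intro mult_left_mono powr_mono) (auto simp: c_def)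
  finally show ?thesis using L by (simp add: A_def c_def powr_minus divide_inverse)
qed

lemma piece_length_conditions:
  fixes K q lam :: real
  assumes q: "q \<ge> 3" and K: "K \<ge> 0" and l: "real l \<ge> (24 * (K + 2) + 5) ^ 2"
    and lam: "lam = 6 * (K + 2) * ln (real l) / (real l * ln q)"
    and s: "s = nat \<lceil>lam * real (l div 2)\<rceil>"
  shows "0 \<le> lam" "1 \<le> s" "2 * s \<le> l div 2"
proof -
  define h where "h = l div 2"
  have "2 \<le> 24 * (K + 2) + 5" using K by simp
  also have "\<dots> \<le> (24 * (K + 2) + 5) ^ 2" using K by (intro self_le_power) auto
  finally have l2: "real l \<ge> 2" using l by simp
  have "exp 1 \<le> q" using q exp_le by linarith
  then have "ln (exp 1) \<le> ln q" using q by (subst ln_le_cancel_iff) auto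
  then have lq: "ln q \<ge> 1" by simp
  have ln_l: "ln (real l) > 0" using l2 by simp
  show lam0: "0 \<le> lam" using ln_l lq l2 K by (simp add: lam)
  have s_h: "s = nat \<lceil>lam * real h\<rceil>" by (simp add: s h_def)
  \<comment> \<open>Since \<lambda> h \<le> 6 (K + 2) \<surd>l, the lower bound on l makes 2 s \<le> h.\<close>
  have "lam > 0" "h \<ge> 1" using ln_l lq l2 K by (auto simp: lam h_def)
  then have "lam * real h > 0" by simp
  then show "1 \<le> s" using s_h by linarith
  have "lam * real h \<le> lam * (real l / 2)" using \<open>lam > 0\<close> by (intro mult_left_mono) (auto simp: h_def)
  also have "\<dots> = 3 * (K + 2) * ln (real l) / ln q" using l2 lq by (simp add: lam field_simps)
  also have "\<dots> \<le> 3 * (K + 2) * ln (real l)"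
    using divide_left_mono[of 1 "ln q" "3 * (K + 2) * ln (real l)"] K ln_l lq by simp
  also have "\<dots> \<le> 3 * (K + 2) * (2 * sqrt (real l))"
    using l2 K ln_powr_bound[of "real l" "1 / 2"] by (intro mult_left_mono) (auto simp: powr_half_sqrt)
  finally have lam_h: "lam * real h \<le> 6 * K * sqrt (real l) + 12 * sqrt (real l)"
    by (simp add: algebra_simps)
  have s_le: "real s \<le> lam * real h + 1" using s_h lam0 \<open>lam * real h > 0\<close> by linarith
  have root: "sqrt (real l) \<ge> 24 * (K + 2) + 5"
    using K real_sqrt_le_mono[OF l] by simp
  then have "(24 * (K + 2) + 5) * sqrt (real l) \<le> sqrt (real l) * sqrt (real l)"
    by (intro mult_right_mono) auto
  then have l_ge: "24 * K * sqrt (real l) + 53 * sqrt (real l) \<le> real l"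
    by (simp add: algebra_simps)
  have "1 \<le> 24 * (K + 2) + 5" using K by simp
  with root have "1 \<le> sqrt (real l)" by linarith
  moreover have "real l - 1 \<le> 2 * real h" by (simp add: h_def)
  ultimately have "2 * real s \<le> real h" using lam_h s_le l_ge by linarith
  then show "2 * s \<le> l div 2" by (simp add: h_def)
qed

lemma rel_prob_small_cancellation_lower_bound:
  fixes C K :: real
  assumes m: "m \<ge> 2" and C: "C > 0" and K: "K \<ge> 0" and l: "real l \<ge> (24 * (K + 2) + 5) ^ 2"
  shows "1 - (8 * (C + 1) + 64 * (C + 1) ^ 2) * exp (3 * (K + 2)) / real l
    \<le> rel_prob m (num_relators C K l) l
        (\<lambda>rs. small_cancellation (6 * (K + 2) * ln (real l) / (real l * ln (2 * real m - 1))) (set rs))"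
proof -
  define q where "q = real (2 * m - 1)"
  define lam where "lam = 6 * (K + 2) * ln (real l) / (real l * ln q)"
  define s where "s = nat \<lceil>lam * real (l div 2)\<rceil>"
  have q: "q \<ge> 3" "2 * real m - 1 = q" using m by (simp_all add: q_def of_nat_diff)
  note conds = piece_length_conditions[OF q(1) K l lam_def s_def]
  have "2 \<le> 24 * (K + 2) + 5" using K by simp
  also have "\<dots> \<le> (24 * (K + 2) + 5) ^ 2" using K by (intro self_le_power) auto
  finally have l2: "l \<ge> 2" using l by linarith
  have "s + l div 2 \<le> l" using conds(3) by linarith
  with conds l2 have "1 - (8 * real (num_relators C K l)
        + 32 * real (num_relators C K l) ^ 2 * real l ^ 2 * real (l + 1)) / q ^ s
      \<le> rel_prob m (num_relators C K l) l (\<lambda>rs. small_cancellation lam (set rs))"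
    unfolding q_def by (intro rel_prob_small_cancellation_ge[OF m l2, of s "l div 2" lam]) (simp_all add: s_def)
  moreover have "(8 * real (num_relators C K l)
        + 32 * real (num_relators C K l) ^ 2 * real l ^ 2 * real (l + 1)) / q ^ s
      \<le> (8 * (C + 1) + 64 * (C + 1) ^ 2) * exp (3 * (K + 2)) / real l"
    using l2 q real_nat_ceiling_ge[of "lam * real (l div 2)"]
    by (intro failure_bound_le[OF C K]) (auto simp: s_def lam_def)
  ultimately show ?thesis by (simp add: lam_def q(2))
qed

theorem proposition6p2:
  fixes m :: nat and C K :: real
  assumes "m \<ge> 2" and "C > 0" and "K \<ge> 0"
  shows "(\<lambda>l. rel_prob m (num_relators C K l) l
            (\<lambda>rs. small_cancellation
                    (6 * (K + 2) * ln (real l) / (real l * ln (2 * real m - 1)))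
                    (set rs)))
         \<longlonglongrightarrow> 1"
proof (rule tendsto_sandwich[OF _ _ _ tendsto_const])
  define M where "M = (8 * (C + 1) + 64 * (C + 1) ^ 2) * exp (3 * (K + 2))"
  have "(\<lambda>l. 1 - M * inverse (real l)) \<longlonglongrightarrow> 1 - M * 0"
    by (intro tendsto_intros lim_inverse_n)
  then show "(\<lambda>l. 1 - M / real l) \<longlonglongrightarrow> 1" by (simp add: divide_inverse)
  obtain N where "(24 * (K + 2) + 5) ^ 2 \<le> real N" using real_arch_simple by blast
  then have large_l: "eventually (\<lambda>l. (24 * (K + 2) + 5) ^ 2 \<le> real l) sequentially"
    unfolding eventually_sequentially by (meson of_nat_le_iff order_trans)
  show "eventually (\<lambda>l. 1 - M / real l \<le> rel_prob m (num_relators C K l) l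
      (\<lambda>rs. small_cancellation (6 * (K + 2) * ln (real l) / (real l * ln (2 * real m - 1))) (set rs))) sequentially"
    using eventually_mono[OF large_l rel_prob_small_cancellation_lower_bound[OF assms]] by (simp add: M_def)
  show "eventually (\<lambda>l. rel_prob m (num_relators C K l) l
      (\<lambda>rs. small_cancellation (6 * (K + 2) * ln (real l) / (real l * ln (2 * real m - 1))) (set rs)) \<le> 1)
      sequentially"
    by (simp add: rel_prob_le_one)
qed

end
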